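(* Let $0<q<1$ and let $a,b\in\mathbb{C}\setminus\{0\}$ be generic (such that all normalizing factors below are finite and nonzero, e.g. $a^2b^2\notin\{q^{-j}:j\in\mathbb{Z}_{\ge0}\}$). For the monic Askey-Wilson polynomials $P_n(z;a,b,c,d\,|\,q)$ one has, as Laurent polynomials in $z$, for all $n\ge0$: $$P_{2n}(z;a,b,-a,-b\,|\,q)=P_n(z^2;a^2,b^2,-1,-q\,|\,q^2),\qquad P_{2n+1}(z;a,b,-a,-b\,|\,q)=(z+z^{-1})\,P_n(z^2;a^2,b^2,-q,-q^2\,|\,q^2).$$
   Context: $(x;q)_k=\prod_{j=0}^{k-1}(1-xq^j)$, $(x_1,\dots,x_r;q)_k=\prod_i(x_i;q)_k$. The monic Askey-Wilson polynomial is $P_n(z;a,b,c,d\,|\,q)=\frac{(ab,ac,ad;q)_n}{a^n(abcdq^{n-1};q)_n}\sum_{k=0}^n\frac{(q^{-n},q^{n-1}abcd,az,az^{-1};q)_k}{(ab,ac,ad,q;q)_k}q^k$, a symmetric Laurent polynomial in $z$ (invariant under $z\mapsto z^{-1}$) of the form $z^n+z^{-n}+$ lower terms, symmetric in $a,b,c,d$ (extended by continuity where formulas degenerate). *)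

theory Defs
  imports Complex_Main
begin

definition qpoch :: "complex \<Rightarrow> complex \<Rightarrow> nat \<Rightarrow> complex" where
  "qpoch x q k = (\<Prod>j<k. 1 - x * q ^ j)"

text \<open>Monic Askey-Wilson polynomial P_n(z;a,b,c,d|q), given by the explicit formula
  (valid when the normalizing factors are finite and nonzero).\<close>
definition AW :: "nat \<Rightarrow> complex \<Rightarrow> complex \<Rightarrow> complex \<Rightarrow> complex \<Rightarrow> complex \<Rightarrow> complex \<Rightarrow> complex" where
  "AW n z a b c d q =
     qpoch (a*b) q n * qpoch (a*c) q n * qpoch (a*d) q n
       / (a ^ n * qpoch (a*b*c*d * q powi (int n - 1)) q n)
     * (\<Sum>k\<le>n. qpoch (q powi (- int n)) q k * qpoch (a*b*c*d * q powi (int n - 1)) q k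
                 * qpoch (a*z) q k * qpoch (a/z) q k
                 / (qpoch (a*b) q k * qpoch (a*c) q k * qpoch (a*d) q k * qpoch q q k)
                 * q ^ k)"

end

(* The monic Askey-Wilson polynomial P_n(z) = P_n(z;a,b,c,d|q) is a polynomial of degree n in
   x = z + 1/z and an eigenfunction of the Askey-Wilson operator
     L f(z) = A(z) (f(qz) - f(z)) + A(1/z) (f(z/q) - f(z)),
     A(z) = (1-az)(1-bz)(1-cz)(1-dz) / ((1-z^2)(1-qz^2)),
   with eigenvalue q^-n (1-q^n)(1-abcd q^(n-1)).  On the basis (az,a/z;q)_k of polynomials in x the
   operator is triangular with these eigenvalues on the diagonal, so for generic parameters P_n is the
   only monic polynomial of degree n in x with its eigenvalue.

   For the parameters (a,b,-a,-b) the weight A(z) is the weight of (a^2,b^2,-1,-q) in base q^2,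
   evaluated at z^2; hence L maps h(z^2) to (L' h)(z^2), and similarly (z+1/z) h(z^2) to
   (z+1/z) ((L'' h)/q + (1-q)(1-a^2 b^2)/q h)(z^2), where L' and L'' are the operators for
   (a^2,b^2,-1,-q) and (a^2,b^2,-q,-q^2) in base q^2.  Therefore P_n(z^2;a^2,b^2,-1,-q|q^2) and
   (z+1/z) P_n(z^2;a^2,b^2,-q,-q^2|q^2) are monic eigenpolynomials in x of degrees 2n and 2n+1 with
   the eigenvalues of P_2n and P_2n+1, and uniqueness gives the identities.  The eigenvalue equations
   are only used at the infinitely many points x = z + 1/z with z real in (sqrt q, 1). *)

theory Submission
  imports Defs "HOL-Computational_Algebra.Polynomial"
begin

section \<open>The q-Pochhammer symbol\<close>

lemma qpoch_0 [simp]: "qpoch x q 0 = 1"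
  by (simp add: qpoch_def)

lemma qpoch_Suc: "qpoch x q (Suc k) = qpoch x q k * (1 - x * q ^ k)"
  by (simp add: qpoch_def)

lemma qpoch_Suc_shift: "qpoch x q (Suc k) = (1 - x) * qpoch (x * q) q k"
  unfolding qpoch_def by (subst prod.lessThan_Suc_shift) (simp add: mult.assoc)

lemma qpoch_nonzero: "(\<And>j. j < k \<Longrightarrow> x * q ^ j \<noteq> 1) \<Longrightarrow> qpoch x q k \<noteq> 0"
  unfolding qpoch_def by simp

lemma qpoch_inverse_power:
  assumes "q \<noteq> 0"
  shows "qpoch (1/q^n) q n * q^n * (\<Prod>j<n. - (q^j)) = qpoch q q n"
proof (induction n)
  case 0
  then show ?case by simp
next
  case (Suc n)
  have "1/q^(Suc n) * q = 1/q^n" using assms by simp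
  then have "qpoch (1/q^(Suc n)) q (Suc n) * q^(Suc n) * (\<Prod>j<Suc n. - (q^j))
     = (qpoch (1/q^n) q n * q^n * (\<Prod>j<n. - (q^j))) * ((1 - 1/q^(Suc n)) * q * (- (q^n)))"
    unfolding qpoch_Suc_shift[of "1/q^(Suc n)"] by (simp add: mult_ac)
  also have "\<dots> = qpoch q q n * (1 - q * q^n)"
    unfolding Suc using assms by (simp add: field_simps)
  finally show ?case by (simp add: qpoch_Suc)
qed

section \<open>The Askey-Wilson operator\<close>

definition aw_weight :: "complex \<Rightarrow> complex \<Rightarrow> complex \<Rightarrow> complex \<Rightarrow> complex \<Rightarrow> complex \<Rightarrow> complex" where
  "aw_weight a b c d q z = (1 - a*z) * (1 - b*z) * (1 - c*z) * (1 - d*z) / ((1 - z^2) * (1 - q*z^2))"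

definition aw_op ::
    "complex \<Rightarrow> complex \<Rightarrow> complex \<Rightarrow> complex \<Rightarrow> complex \<Rightarrow> (complex \<Rightarrow> complex) \<Rightarrow> complex \<Rightarrow> complex" where
  "aw_op a b c d q f z =
     aw_weight a b c d q z * (f (q*z) - f z) + aw_weight a b c d q (1/z) * (f (z/q) - f z)"

text \<open>At points with \<open>aw_regular q z\<close> both weights \<open>aw_weight _ z\<close> and \<open>aw_weight _ (1/z)\<close>
  in \<open>aw_op\<close> have nonzero denominators; only there do the identities below hold.\<close>

definition aw_regular :: "complex \<Rightarrow> complex \<Rightarrow> bool" where
  "aw_regular q z \<longleftrightarrow> z \<noteq> 0 \<and> z^2 \<noteq> 1 \<and> q * z^2 \<noteq> 1 \<and> z^2 \<noteq> q"

lemma aw_regular_inverse: "aw_regular q (1/z) \<longleftrightarrow> aw_regular q z"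
  unfolding aw_regular_def by (auto simp: power_one_over field_simps)

lemma aw_op_sum:
  "aw_op a b c d q (\<lambda>w. \<Sum>k\<in>K. e k * f k w) z = (\<Sum>k\<in>K. e k * aw_op a b c d q (f k) z)"
  unfolding aw_op_def
  by (simp add: sum_distrib_left sum_subtractf[symmetric] sum.distrib[symmetric] algebra_simps)

lemma aw_op_diff:
  "aw_op a b c d q (\<lambda>w. f w - g w) z = aw_op a b c d q f z - aw_op a b c d q g z"
  unfolding aw_op_def by (simp add: algebra_simps)

lemma aw_op_cong:
  assumes "z \<noteq> 0" "q \<noteq> 0" "\<And>w. w \<noteq> 0 \<Longrightarrow> f w = g w"
  shows "aw_op a b c d q f z = aw_op a b c d q g z"
  unfolding aw_op_def using assms by simp

definition aw_eigenvalue :: "complex \<Rightarrow> complex \<Rightarrow> complex \<Rightarrow> complex \<Rightarrow> complex \<Rightarrow> nat \<Rightarrow> complex" where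
  "aw_eigenvalue a b c d q n = (1 - q^n) * (1 - a*b*c*d * q^n / q) / q^n"

definition aw_lowering :: "complex \<Rightarrow> complex \<Rightarrow> complex \<Rightarrow> complex \<Rightarrow> complex \<Rightarrow> nat \<Rightarrow> complex" where
  "aw_lowering a b c d q n =
     - ((1 - q^n) * (1 - a*b * q^n / q) * (1 - a*c * q^n / q) * (1 - a*d * q^n / q) / q^n)"

definition aw_basis :: "complex \<Rightarrow> complex \<Rightarrow> nat \<Rightarrow> complex \<Rightarrow> complex" where
  "aw_basis a q k z = qpoch (a*z) q k * qpoch (a/z) q k"

lemma aw_basis_inverse: "aw_basis a q k (1/z) = aw_basis a q k z"
  by (simp add: aw_basis_def mult.commute)

lemma aw_basis_Suc: "aw_basis a q (Suc j) z = aw_basis a q j z * ((1 - a*q^j*z) * (1 - a*q^j/z))"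
  by (simp add: aw_basis_def qpoch_Suc mult_ac)

lemma aw_basis_Suc_shift:
  assumes "q \<noteq> 0"
  shows "q * (1 - a*z) * aw_basis a q (Suc j) (q*z)
    = aw_basis a q j z * ((1 - a*q^j*z) * (1 - a*q*q^j*z) * (q - a/z))"
proof -
  have "(1 - a*z) * qpoch (a*(q*z)) q (Suc j) = qpoch (a*z) q (Suc (Suc j))"
    by (simp add: qpoch_Suc_shift[of "a*z" q "Suc j"] mult_ac)
  also have "\<dots> = qpoch (a*z) q j * ((1 - a*q^j*z) * (1 - a*q*q^j*z))"
    by (simp add: qpoch_Suc mult_ac)
  finally have up: "(1 - a*z) * qpoch (a*(q*z)) q (Suc j) = \<dots>" .
  have down: "q * qpoch (a/(q*z)) q (Suc j) = (q - a/z) * qpoch (a/z) q j"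
    using assms by (simp add: qpoch_Suc_shift field_simps)
  have "q * (1 - a*z) * aw_basis a q (Suc j) (q*z)
      = ((1 - a*z) * qpoch (a*(q*z)) q (Suc j)) * (q * qpoch (a/(q*z)) q (Suc j))"
    by (simp add: aw_basis_def mult_ac)
  then show ?thesis
    unfolding up down by (simp add: aw_basis_def mult_ac)
qed

text \<open>The rational identity behind \<open>aw_op_basis\<close>, with \<open>t = q^j\<close> and \<open>y = 1/z\<close>.\<close>

lemma aw_basis_step_identity:
  fixes a b c d q t z y :: complex
  assumes z: "aw_regular q z" and y: "aw_regular q y" and zy: "z * y = 1" and t: "t \<noteq> 0"
  shows "(1-b*z)*(1-c*z)*(1-d*z) / ((1-z^2)*(1-q*z^2))
           * ((1-a*t*z)*(1-a*q*t*z)*(q-a*y) - q*(1-a*z)*(1-a*t*z)*(1-a*t*y))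
       + (1-b*y)*(1-c*y)*(1-d*y) / ((1-y^2)*(1-q*y^2))
           * ((1-a*t*y)*(1-a*q*t*y)*(q-a*z) - q*(1-a*y)*(1-a*t*z)*(1-a*t*y))
       = ((1-q*t)*(1-a*b*c*d*t)*(1-a*t*z)*(1-a*t*y) - (1-q*t)*(1-a*b*t)*(1-a*c*t)*(1-a*d*t)) / t"
proof -
  have fraction: "N1 / D1 * X1 + N2 / D2 * X2 = R / t"
    if "t * (N1 * X1 * D2 + N2 * X2 * D1) = R * D1 * D2" "D1 \<noteq> 0" "D2 \<noteq> 0" for N1 N2 X1 X2 D1 D2 R
    using that t by (simp add: field_simps)
  have "t * ((1-b*z)*(1-c*z)*(1-d*z) * ((1-a*t*z)*(1-a*q*t*z)*(q-a*y) - q*(1-a*z)*(1-a*t*z)*(1-a*t*y))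
          * ((1-y^2)*(1-q*y^2))
      + (1-b*y)*(1-c*y)*(1-d*y) * ((1-a*t*y)*(1-a*q*t*y)*(q-a*z) - q*(1-a*y)*(1-a*t*z)*(1-a*t*y))
          * ((1-z^2)*(1-q*z^2)))
    = ((1-q*t)*(1-a*b*c*d*t)*(1-a*t*z)*(1-a*t*y) - (1-q*t)*(1-a*b*t)*(1-a*c*t)*(1-a*d*t))
      * ((1-z^2)*(1-q*z^2)) * ((1-y^2)*(1-q*y^2))"
    using zy by algebra
  moreover have "(1-z^2)*(1-q*z^2) \<noteq> 0" "(1-y^2)*(1-q*y^2) \<noteq> 0"
    using z y by (auto simp: aw_regular_def)
  ultimately show ?thesis by (rule fraction)
qed

lemma aw_op_basis:
  assumes z: "aw_regular q z" and q: "q \<noteq> 0"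
  shows "aw_op a b c d q (aw_basis a q k) z
    = aw_eigenvalue a b c d q k * aw_basis a q k z + aw_lowering a b c d q k * aw_basis a q (k - 1) z"
proof (cases k)
  case 0
  then show ?thesis by (simp add: aw_op_def aw_basis_def aw_eigenvalue_def aw_lowering_def)
next
  case (Suc j)
  define t where "t = q^j"
  define y where "y = 1/z"
  define P where "P = aw_basis a q j z"
  define Y where "Y w = (1-b*w)*(1-c*w)*(1-d*w)/((1-w^2)*(1-q*w^2))" for w
  have "z \<noteq> 0" "t \<noteq> 0" using z q by (simp_all add: aw_regular_def t_def)
  have y: "aw_regular q y" "z * y = 1" "a/y = a*z"
    using z \<open>z \<noteq> 0\<close> by (simp_all add: y_def aw_regular_inverse)
  have up: "q * (1 - a*z) * aw_basis a q (Suc j) (q*z) = P * ((1-a*t*z)*(1-a*q*t*z)*(q-a*y))"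
    using aw_basis_Suc_shift[OF q, of a z j] by (simp add: P_def t_def y_def)
  have "q * (1 - a*y) * aw_basis a q (Suc j) (q*y) = aw_basis a q j y * ((1-a*t*y)*(1-a*q*t*y)*(q-a*z))"
    using aw_basis_Suc_shift[OF q, of a y j] y(3) by (simp add: t_def)
  moreover have "aw_basis a q (Suc j) (q*y) = aw_basis a q (Suc j) (z/q)"
    using aw_basis_inverse[of a q "Suc j" "z/q"] by (simp add: y_def)
  ultimately have down: "q * (1 - a*y) * aw_basis a q (Suc j) (z/q) = P * ((1-a*t*y)*(1-a*q*t*y)*(q-a*z))"
    using aw_basis_inverse[of a q j z] by (simp add: P_def y_def)
  have here: "aw_basis a q (Suc j) z = P * ((1-a*t*z)*(1-a*t*y))"
    by (simp add: aw_basis_Suc P_def t_def y_def mult_ac)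
  have "aw_weight a b c d q w = (1 - a*w) * Y w" for w
    by (simp add: aw_weight_def Y_def mult_ac)
  then have "q * aw_op a b c d q (aw_basis a q (Suc j)) z
      = Y z * (q * (1-a*z) * aw_basis a q (Suc j) (q*z) - q * (1-a*z) * aw_basis a q (Suc j) z)
      + Y y * (q * (1-a*y) * aw_basis a q (Suc j) (z/q) - q * (1-a*y) * aw_basis a q (Suc j) z)"
    unfolding aw_op_def y_def by (simp only:) (simp add: algebra_simps)
  also have "\<dots> = P * (Y z * ((1-a*t*z)*(1-a*q*t*z)*(q-a*y) - q*(1-a*z)*(1-a*t*z)*(1-a*t*y))
      + Y y * ((1-a*t*y)*(1-a*q*t*y)*(q-a*z) - q*(1-a*y)*(1-a*t*z)*(1-a*t*y)))"
    unfolding up down here by (simp add: algebra_simps)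
  also have "\<dots> = P * ((1-q*t)*(1-a*b*c*d*t)*(1-a*t*z)*(1-a*t*y) - (1-q*t)*(1-a*b*t)*(1-a*c*t)*(1-a*d*t)) / t"
    using aw_basis_step_identity[OF z y(1,2) \<open>t \<noteq> 0\<close>, where a=a and b=b and c=c and d=d]
    by (simp add: Y_def)
  also have "\<dots> = q * (aw_eigenvalue a b c d q k * aw_basis a q k z + aw_lowering a b c d q k * P)"
    unfolding Suc here aw_eigenvalue_def aw_lowering_def using q \<open>t \<noteq> 0\<close>
    by (simp add: t_def field_simps)
  finally show ?thesis using q by (simp add: Suc P_def)
qed

lemma aw_op_basis_sum:
  assumes z: "aw_regular q z" and q: "q \<noteq> 0" and e: "\<And>k. m < k \<Longrightarrow> e k = 0"
  shows "aw_op a b c d q (\<lambda>w. \<Sum>k\<le>m. e k * aw_basis a q k w) z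
    = (\<Sum>k\<le>m. (e k * aw_eigenvalue a b c d q k + e (Suc k) * aw_lowering a b c d q (Suc k))
                 * aw_basis a q k z)"
proof -
  let ?l = "aw_eigenvalue a b c d q" and ?m = "aw_lowering a b c d q" and ?p = "\<lambda>k. aw_basis a q k z"
  have "aw_op a b c d q (\<lambda>w. \<Sum>k\<le>m. e k * aw_basis a q k w) z
      = (\<Sum>k\<le>m. e k * ?l k * ?p k) + (\<Sum>k\<le>m. e k * ?m k * ?p (k - 1))"
    unfolding aw_op_sum aw_op_basis[OF z q] by (simp add: sum.distrib algebra_simps)
  also have "(\<Sum>k\<le>m. e k * ?m k * ?p (k - 1)) = (\<Sum>k<m. e (Suc k) * ?m (Suc k) * ?p k)"
    unfolding lessThan_Suc_atMost[symmetric] sum.lessThan_Suc_shift by (simp add: aw_lowering_def)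
  also have "\<dots> = (\<Sum>k\<le>m. e (Suc k) * ?m (Suc k) * ?p k)"
    unfolding lessThan_Suc_atMost[symmetric] sum.lessThan_Suc using e by simp
  finally show ?thesis by (simp add: sum.distrib[symmetric] algebra_simps)
qed

section \<open>The polynomials as eigenfunctions\<close>

definition aw_prefactor :: "complex \<Rightarrow> complex \<Rightarrow> complex \<Rightarrow> complex \<Rightarrow> complex \<Rightarrow> nat \<Rightarrow> complex" where
  "aw_prefactor a b c d q n = qpoch (a*b) q n * qpoch (a*c) q n * qpoch (a*d) q n
     / (a ^ n * qpoch (a*b*c*d * q powi (int n - 1)) q n)"

definition aw_coeff :: "complex \<Rightarrow> complex \<Rightarrow> complex \<Rightarrow> complex \<Rightarrow> complex \<Rightarrow> nat \<Rightarrow> nat \<Rightarrow> complex" where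
  "aw_coeff a b c d q n k = qpoch (q powi (- int n)) q k * qpoch (a*b*c*d * q powi (int n - 1)) q k
     / (qpoch (a*b) q k * qpoch (a*c) q k * qpoch (a*d) q k * qpoch q q k) * q ^ k"

lemma AW_eq_sum:
  "AW n z a b c d q = aw_prefactor a b c d q n * (\<Sum>k\<le>n. aw_coeff a b c d q n k * aw_basis a q k z)"
  unfolding AW_def aw_prefactor_def aw_coeff_def aw_basis_def by (simp add: divide_inverse mult_ac)

text \<open>The parameter conditions under which \<open>P\<^sub>n\<close> is a monic polynomial of degree \<open>n\<close> in
  \<open>z + 1/z\<close> whose eigenvalue differs from those of all lower degrees.\<close>

definition aw_nondegenerate :: "complex \<Rightarrow> complex \<Rightarrow> complex \<Rightarrow> complex \<Rightarrow> complex \<Rightarrow> nat \<Rightarrow> bool" where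
  "aw_nondegenerate a b c d q n \<longleftrightarrow> a \<noteq> 0 \<and> q \<noteq> 0 \<and>
     (\<forall>k<n. a*b*q^k \<noteq> 1 \<and> a*c*q^k \<noteq> 1 \<and> a*d*q^k \<noteq> 1 \<and> q^Suc k \<noteq> 1 \<and> a*b*c*d*q^(n-1+k) \<noteq> 1)"

lemma aw_nondegenerate_qpoch:
  assumes "aw_nondegenerate a b c d q n" "k \<le> n"
  shows "qpoch (a*b) q k \<noteq> 0" "qpoch (a*c) q k \<noteq> 0" "qpoch (a*d) q k \<noteq> 0" "qpoch q q k \<noteq> 0"
  using assms by (auto intro!: qpoch_nonzero simp: aw_nondegenerate_def mult.commute[of q])

lemma aw_eigenvalue_diff:
  assumes "q \<noteq> 0"
  shows "aw_eigenvalue a b c d q n - aw_eigenvalue a b c d q k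
    = (1/q^n - 1/q^k) * (1 - a*b*c*d * q^n * q^k / q)"
  unfolding aw_eigenvalue_def using assms by (simp add: field_simps)

lemma aw_eigenvalue_simple:
  assumes "aw_nondegenerate a b c d q n" "k < n"
  shows "aw_eigenvalue a b c d q k \<noteq> aw_eigenvalue a b c d q n"
proof -
  have q: "q \<noteq> 0"
    and gen: "\<And>j. j < n \<Longrightarrow> q^Suc j \<noteq> 1 \<and> a*b*c*d*q^(n-1+j) \<noteq> 1"
    using assms(1) by (simp_all add: aw_nondegenerate_def)
  have "n - k = Suc (n - k - 1)" "n - k - 1 < n" using assms(2) by auto
  then have "q^(n-k) \<noteq> 1" using gen by metis
  moreover have "q^n = q^k * q^(n-k)"
    using assms(2) by (simp flip: power_add)
  ultimately have "q^n \<noteq> q^k" using q by auto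
  then have "1/q^n - 1/q^k \<noteq> 0" using q by (simp add: field_simps)
  moreover have "a*b*c*d * q^n * q^k / q = a*b*c*d * q^(n-1+k)"
    using q assms(2) by (cases n) (simp_all add: power_add)
  then have "1 - a*b*c*d * q^n * q^k / q \<noteq> 0"
    using gen[OF assms(2)] by simp
  ultimately show ?thesis
    using aw_eigenvalue_diff[OF q, of a b c d n k] by auto
qed

lemma aw_coeff_vanish:
  assumes "q \<noteq> 0" "n < k"
  shows "aw_coeff a b c d q n k = 0"
proof -
  have "1 - q powi (- int n) * q^n = 0"
    using assms(1) by (simp add: power_int_minus field_simps)
  then have "qpoch (q powi (- int n)) q k = 0"
    unfolding qpoch_def using assms(2) by (auto simp: prod_zero_iff)
  then show ?thesis by (simp add: aw_coeff_def)
qed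

text \<open>This recurrence cancels the lowering terms of \<open>aw_op_basis\<close>, making \<open>P\<^sub>n\<close> an eigenfunction.\<close>

lemma aw_coeff_Suc:
  assumes q: "q \<noteq> 0"
    and nz: "qpoch (a*b) q (Suc k) \<noteq> 0" "qpoch (a*c) q (Suc k) \<noteq> 0" "qpoch (a*d) q (Suc k) \<noteq> 0"
      "qpoch q q (Suc k) \<noteq> 0"
  shows "aw_coeff a b c d q n (Suc k) * aw_lowering a b c d q (Suc k)
    = aw_coeff a b c d q n k * (aw_eigenvalue a b c d q n - aw_eigenvalue a b c d q k)"
proof -
  define N where "N = qpoch (q powi (- int n)) q k * qpoch (a*b*c*d * q powi (int n - 1)) q k"
  define D where "D = qpoch (a*b) q k * qpoch (a*c) q k * qpoch (a*d) q k * qpoch q q k"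
  define W where "W = (1 - a*b*q^k) * (1 - a*c*q^k) * (1 - a*d*q^k) * (1 - q*q^k)"
  define Q where "Q = q^k"
  define M where "M = q^n"
  define S where "S = a*b*c*d"
  have "Q \<noteq> 0" "M \<noteq> 0" using q by (simp_all add: Q_def M_def)
  have "D \<noteq> 0" "W \<noteq> 0" using nz by (simp_all add: D_def W_def qpoch_Suc mult.commute[of q])
  have "q powi (- int n) = 1/M" "q powi (int n - 1) = M/q"
    using q by (simp_all add: M_def power_int_minus power_int_diff inverse_eq_divide)
  then have coeff_Suc: "aw_coeff a b c d q n (Suc k) = N * ((1 - Q/M) * (1 - S*M/q*Q)) / (D * W) * (q*Q)"
    by (simp add: aw_coeff_def qpoch_Suc N_def D_def W_def Q_def S_def mult_ac)
  have lowering: "aw_lowering a b c d q (Suc k) = - (W / (q*Q))"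
    by (simp add: aw_lowering_def W_def Q_def mult_ac)
  have coeff: "aw_coeff a b c d q n k = N / D * Q"
    by (simp add: aw_coeff_def N_def D_def Q_def)
  have eigenvalue: "aw_eigenvalue a b c d q n - aw_eigenvalue a b c d q k = (1/M - 1/Q) * (1 - S*M*Q/q)"
    unfolding aw_eigenvalue_diff[OF q] by (simp add: M_def Q_def S_def)
  show ?thesis
    unfolding coeff_Suc lowering coeff eigenvalue
    using \<open>Q \<noteq> 0\<close> \<open>M \<noteq> 0\<close> \<open>D \<noteq> 0\<close> \<open>W \<noteq> 0\<close> q by (simp add: field_simps)
qed

lemma aw_op_AW:
  assumes nondeg: "aw_nondegenerate a b c d q n" and z: "aw_regular q z"
  shows "aw_op a b c d q (\<lambda>w. AW n w a b c d q) z = aw_eigenvalue a b c d q n * AW n z a b c d q"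
proof -
  let ?e = "\<lambda>k. aw_prefactor a b c d q n * aw_coeff a b c d q n k"
    and ?l = "aw_eigenvalue a b c d q" and ?m = "aw_lowering a b c d q"
  have q: "q \<noteq> 0" using nondeg by (simp add: aw_nondegenerate_def)
  have vanish: "?e k = 0" if "n < k" for k
    using aw_coeff_vanish[OF q that] by simp
  have recurrence: "?e (Suc k) * ?m (Suc k) = ?e k * (?l n - ?l k)" if "k \<le> n" for k
  proof (cases "k = n")
    case True
    then show ?thesis using vanish[of "Suc k"] by simp
  next
    case False
    with that have "Suc k \<le> n" by simp
    from aw_coeff_Suc[OF q aw_nondegenerate_qpoch[OF nondeg this], where n = n]
    show ?thesis by (simp add: mult.assoc)
  qed
  then have step: "?e k * ?l k + ?e (Suc k) * ?m (Suc k) = ?l n * ?e k" if "k \<le> n" for k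
    using that by (simp add: algebra_simps)
  have "(\<lambda>w. AW n w a b c d q) = (\<lambda>w. \<Sum>k\<le>n. ?e k * aw_basis a q k w)"
    by (simp add: AW_eq_sum sum_distrib_left mult.assoc)
  then have "aw_op a b c d q (\<lambda>w. AW n w a b c d q) z
      = (\<Sum>k\<le>n. (?e k * ?l k + ?e (Suc k) * ?m (Suc k)) * aw_basis a q k z)"
    using aw_op_basis_sum[OF z q, of n ?e] vanish by simp
  also have "\<dots> = (\<Sum>k\<le>n. ?l n * ?e k * aw_basis a q k z)"
    by (rule sum.cong) (simp_all only: atMost_iff step)
  also have "\<dots> = ?l n * (\<Sum>k\<le>n. ?e k * aw_basis a q k z)"
    by (simp add: sum_distrib_left mult.assoc)
  finally show ?thesis
    by (simp add: AW_eq_sum sum_distrib_left mult.assoc)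
qed

section \<open>Polynomials in \<open>z + 1/z\<close>\<close>

definition aw_basis_poly :: "complex \<Rightarrow> complex \<Rightarrow> nat \<Rightarrow> complex poly" where
  "aw_basis_poly a q k = (\<Prod>j<k. [:1 + a^2 * q^(2*j), - (a * q^j):])"

lemma poly_aw_basis_poly:
  assumes "z \<noteq> 0"
  shows "poly (aw_basis_poly a q k) (z + 1/z) = aw_basis a q k z"
proof -
  have "poly [:1 + a^2 * q^(2*j), - (a * q^j):] (z + 1/z) = (1 - a*z*q^j) * (1 - a/z*q^j)" for j
    using assms by (simp add: field_simps power_mult power2_eq_square)
  then show ?thesis
    unfolding aw_basis_poly_def aw_basis_def qpoch_def poly_prod prod.distrib[symmetric] by simp
qed

lemma degree_aw_basis_poly:
  assumes "a \<noteq> 0" "q \<noteq> 0"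
  shows "degree (aw_basis_poly a q k) = k"
  unfolding aw_basis_poly_def using assms by (subst degree_prod_eq_sum_degree) auto

lemma lead_coeff_aw_basis_poly:
  assumes "a \<noteq> 0" "q \<noteq> 0"
  shows "lead_coeff (aw_basis_poly a q k) = (\<Prod>j<k. - (a * q^j))"
  unfolding aw_basis_poly_def lead_coeff_prod by (rule prod.cong) (use assms in auto)

lemma aw_basis_poly_sum:
  assumes "a \<noteq> 0" "q \<noteq> 0"
  shows "degree (\<Sum>k\<le>m. smult (e k) (aw_basis_poly a q k)) \<le> m"
    and "coeff (\<Sum>k\<le>m. smult (e k) (aw_basis_poly a q k)) m = e m * lead_coeff (aw_basis_poly a q m)"
proof -
  have deg: "degree (\<Sum>k\<le>m'. smult (e k) (aw_basis_poly a q k)) \<le> m'" for m'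
    by (rule degree_sum_le)
       (auto intro: order.trans[OF degree_smult_le] simp: degree_aw_basis_poly[OF assms])
  then show "degree (\<Sum>k\<le>m. smult (e k) (aw_basis_poly a q k)) \<le> m" .
  show "coeff (\<Sum>k\<le>m. smult (e k) (aw_basis_poly a q k)) m = e m * lead_coeff (aw_basis_poly a q m)"
  proof (cases m)
    case 0
    then show ?thesis by (simp add: aw_basis_poly_def)
  next
    case (Suc m')
    have "coeff (\<Sum>k\<le>m'. smult (e k) (aw_basis_poly a q k)) m = 0"
      using deg[of m'] Suc by (intro coeff_eq_0) simp
    then show ?thesis
      using Suc by (simp add: degree_aw_basis_poly[OF assms] del: coeff_sum)
  qed
qed

lemma aw_basis_poly_span:
  assumes a: "a \<noteq> 0" and q: "q \<noteq> 0" and "degree F \<le> m"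
  shows "\<exists>e. (\<forall>k>m. e k = 0) \<and> F = (\<Sum>k\<le>m. smult (e k) (aw_basis_poly a q k))"
  using assms(3)
proof (induction m arbitrary: F)
  case 0
  then have "F = [:coeff F 0:]" using degree_0_id[of F] by simp
  then show ?case
    by (intro exI[of _ "\<lambda>k. if k = 0 then coeff F 0 else 0"]) (simp add: aw_basis_poly_def)
next
  case (Suc m)
  let ?B = "aw_basis_poly a q (Suc m)"
  define c where "c = coeff F (Suc m) / lead_coeff ?B"
  have B: "degree ?B = Suc m" "lead_coeff ?B \<noteq> 0"
    using degree_aw_basis_poly[OF a q] lead_coeff_aw_basis_poly[OF a q] a q by auto
  have deg: "degree (F - smult c ?B) \<le> Suc m"
    using Suc.prems B by (intro degree_diff_le) (auto intro: order.trans[OF degree_smult_le])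
  have top: "coeff (F - smult c ?B) (Suc m) = 0"
    using B by (simp add: c_def)
  have "degree (F - smult c ?B) \<le> m"
  proof (rule degree_le, intro allI impI)
    fix i assume "m < i"
    then show "coeff (F - smult c ?B) i = 0"
    proof (cases "i = Suc m")
      case False
      with \<open>m < i\<close> deg show ?thesis by (intro coeff_eq_0) simp
    qed (use top in simp)
  qed
  from Suc.IH[OF this] obtain e where e: "\<forall>k>m. e k = 0"
    "F - smult c ?B = (\<Sum>k\<le>m. smult (e k) (aw_basis_poly a q k))" by blast
  show ?case
  proof (intro exI conjI)
    show "\<forall>k>Suc m. (e(Suc m := c)) k = 0" using e(1) by simp
    have "F = (\<Sum>k\<le>m. smult (e k) (aw_basis_poly a q k)) + smult c ?B"
      using e(2) by (simp add: algebra_simps)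
    then show "F = (\<Sum>k\<le>Suc m. smult ((e(Suc m := c)) k) (aw_basis_poly a q k))"
      by (simp add: sum.atMost_Suc)
  qed
qed

definition AW_poly :: "nat \<Rightarrow> complex \<Rightarrow> complex \<Rightarrow> complex \<Rightarrow> complex \<Rightarrow> complex \<Rightarrow> complex poly" where
  "AW_poly n a b c d q =
     smult (aw_prefactor a b c d q n) (\<Sum>k\<le>n. smult (aw_coeff a b c d q n k) (aw_basis_poly a q k))"

lemma poly_AW_poly: "z \<noteq> 0 \<Longrightarrow> poly (AW_poly n a b c d q) (z + 1/z) = AW n z a b c d q"
  unfolding AW_poly_def AW_eq_sum by (simp add: poly_sum poly_aw_basis_poly)

lemma degree_AW_poly: "a \<noteq> 0 \<Longrightarrow> q \<noteq> 0 \<Longrightarrow> degree (AW_poly n a b c d q) \<le> n"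
  unfolding AW_poly_def using aw_basis_poly_sum(1) degree_smult_le order.trans by blast

lemma coeff_AW_poly:
  assumes nondeg: "aw_nondegenerate a b c d q n"
  shows "coeff (AW_poly n a b c d q) n = 1"
proof -
  have a: "a \<noteq> 0" and q: "q \<noteq> 0" and gen: "\<forall>k<n. a*b*c*d*q^(n-1+k) \<noteq> 1"
    using nondeg by (simp_all add: aw_nondegenerate_def)
  note nz = aw_nondegenerate_qpoch[OF nondeg order.refl]
  define X where "X = qpoch (a*b) q n * qpoch (a*c) q n * qpoch (a*d) q n"
  define Y where "Y = qpoch (a*b*c*d * q powi (int n - 1)) q n"
  have "X \<noteq> 0" using nz by (simp add: X_def)
  have "Y \<noteq> 0"
    unfolding Y_def
  proof (rule qpoch_nonzero)
    fix j assume "j < n"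
    then have "q powi (int n - 1) * q^j = q^(n-1+j)"
      using q by (simp add: power_int_diff power_add field_simps flip: power_Suc)
    then show "a*b*c*d * q powi (int n - 1) * q^j \<noteq> 1"
      using gen \<open>j < n\<close> by (simp add: mult.assoc)
  qed
  have "(\<Prod>j<n. - (a * q^j)) = (\<Prod>j<n. a * - (q^j))" by simp
  then have lead: "lead_coeff (aw_basis_poly a q n) = a^n * (\<Prod>j<n. - (q^j))"
    unfolding lead_coeff_aw_basis_poly[OF a q] by (simp only: prod.distrib prod_constant card_lessThan)
  have "q powi (- int n) = 1/q^n"
    using q by (simp add: power_int_minus inverse_eq_divide)
  then have "coeff (AW_poly n a b c d q) n
      = X / (a^n * Y) * (qpoch (1/q^n) q n * Y / (X * qpoch q q n) * q^n) * (a^n * (\<Prod>j<n. - (q^j)))"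
    unfolding AW_poly_def coeff_smult aw_basis_poly_sum(2)[OF a q] lead
    by (simp add: aw_prefactor_def aw_coeff_def X_def Y_def)
  also have "\<dots> = qpoch (1/q^n) q n * q^n * (\<Prod>j<n. - (q^j)) / qpoch q q n"
    using a \<open>X \<noteq> 0\<close> \<open>Y \<noteq> 0\<close> by (simp add: field_simps)
  also have "\<dots> = 1"
    using nz(4) by (simp add: qpoch_inverse_power[OF q])
  finally show ?thesis .
qed

lemma aw_op_basis_poly_sum:
  assumes z: "aw_regular q z" and q: "q \<noteq> 0" and e: "\<And>k. m < k \<Longrightarrow> e k = 0"
  shows "aw_op a b c d q (\<lambda>w. poly (\<Sum>k\<le>m. smult (e k) (aw_basis_poly a q k)) (w + 1/w)) z
    = poly (\<Sum>k\<le>m. smult (e k * aw_eigenvalue a b c d q k + e (Suc k) * aw_lowering a b c d q (Suc k))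
                         (aw_basis_poly a q k)) (z + 1/z)"
proof -
  have "z \<noteq> 0" using z by (simp add: aw_regular_def)
  then have "aw_op a b c d q (\<lambda>w. poly (\<Sum>k\<le>m. smult (e k) (aw_basis_poly a q k)) (w + 1/w)) z
      = aw_op a b c d q (\<lambda>w. \<Sum>k\<le>m. e k * aw_basis a q k w) z"
    using q by (intro aw_op_cong) (simp_all add: poly_sum poly_aw_basis_poly)
  also have "\<dots> = (\<Sum>k\<le>m. (e k * aw_eigenvalue a b c d q k + e (Suc k) * aw_lowering a b c d q (Suc k))
                 * aw_basis a q k z)"
    by (rule aw_op_basis_sum[OF z q e])
  finally show ?thesis
    using \<open>z \<noteq> 0\<close> by (simp add: poly_sum poly_aw_basis_poly)
qed

lemma aw_eigenpoly_eq_0: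
  assumes a: "a \<noteq> 0" and q: "q \<noteq> 0"
    and simple: "\<And>k. k < N \<Longrightarrow> aw_eigenvalue a b c d q k \<noteq> aw_eigenvalue a b c d q N"
    and Z: "\<forall>z\<in>Z. aw_regular q z" "infinite ((\<lambda>z. z + 1/z) ` Z)"
    and D: "degree D \<le> N" "coeff D N = 0"
    and eigen: "\<forall>z\<in>Z. aw_op a b c d q (\<lambda>w. poly D (w + 1/w)) z
                          = aw_eigenvalue a b c d q N * poly D (z + 1/z)"
  shows "D = 0"
proof (rule ccontr)
  assume "D \<noteq> 0"
  let ?l = "aw_eigenvalue a b c d q" and ?B = "aw_basis_poly a q"
  define m where "m = degree D"
  have "m \<noteq> N" using D \<open>D \<noteq> 0\<close> by (auto simp: m_def)
  then have "m < N" using D(1) by (simp add: m_def)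
  obtain e where e: "\<And>k. m < k \<Longrightarrow> e k = 0" and D_eq: "D = (\<Sum>k\<le>m. smult (e k) (?B k))"
    using aw_basis_poly_span[OF a q, where F=D and m=m] unfolding m_def by blast
  have "coeff D m = e m * lead_coeff (?B m)"
    unfolding D_eq by (rule aw_basis_poly_sum(2)[OF a q])
  then have "e m \<noteq> 0" using \<open>D \<noteq> 0\<close> by (auto simp: m_def)
  define G where "G = (\<Sum>k\<le>m. smult (e k * ?l k + e (Suc k) * aw_lowering a b c d q (Suc k)) (?B k))
    - smult (?l N) D"
  have "poly G (z + 1/z) = 0" if "z \<in> Z" for z
    using eigen that aw_op_basis_poly_sum[where e=e and m=m and a=a and b=b and c=c and d=d, OF bspec[OF Z(1) that] q e]
    by (simp add: G_def D_eq[symmetric])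
  then have "(\<lambda>z. z + 1/z) ` Z \<subseteq> {x. poly G x = 0}" by auto
  then have "G = 0" using Z(2) poly_roots_finite finite_subset by blast
  moreover have "coeff G m = e m * (?l m - ?l N) * lead_coeff (?B m)"
    unfolding G_def coeff_diff aw_basis_poly_sum(2)[OF a q] coeff_smult \<open>coeff D m = _\<close>
    by (simp add: e algebra_simps)
  moreover have "lead_coeff (?B m) \<noteq> 0"
    using lead_coeff_aw_basis_poly[OF a q] a q by simp
  ultimately show False
    using \<open>e m \<noteq> 0\<close> simple[OF \<open>m < N\<close>] by simp
qed

lemma AW_poly_unique:
  assumes nondeg: "aw_nondegenerate a b c d q N"
    and Z: "\<forall>z\<in>Z. aw_regular q z" "infinite ((\<lambda>z. z + 1/z) ` Z)"
    and F: "degree F \<le> N" "coeff F N = 1"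
    and eigen: "\<forall>z\<in>Z. aw_op a b c d q (\<lambda>w. poly F (w + 1/w)) z
                          = aw_eigenvalue a b c d q N * poly F (z + 1/z)"
  shows "F = AW_poly N a b c d q"
proof -
  have a: "a \<noteq> 0" and q: "q \<noteq> 0" using nondeg by (simp_all add: aw_nondegenerate_def)
  have AW_eigen: "aw_op a b c d q (\<lambda>w. poly (AW_poly N a b c d q) (w + 1/w)) z
      = aw_eigenvalue a b c d q N * poly (AW_poly N a b c d q) (z + 1/z)" if "z \<in> Z" for z
  proof -
    have "aw_regular q z" using Z(1) that by blast
    then have "z \<noteq> 0" by (simp add: aw_regular_def)
    have "aw_op a b c d q (\<lambda>w. poly (AW_poly N a b c d q) (w + 1/w)) z = aw_op a b c d q (\<lambda>w. AW N w a b c d q) z"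
      using \<open>z \<noteq> 0\<close> q by (intro aw_op_cong) (simp_all add: poly_AW_poly)
    then show ?thesis
      using aw_op_AW[OF nondeg \<open>aw_regular q z\<close>] \<open>z \<noteq> 0\<close> by (simp add: poly_AW_poly)
  qed
  have "F - AW_poly N a b c d q = 0"
  proof (rule aw_eigenpoly_eq_0[OF a q aw_eigenvalue_simple[OF nondeg] Z])
    show "degree (F - AW_poly N a b c d q) \<le> N"
      using F(1) degree_AW_poly[OF a q] by (intro degree_diff_le)
    show "coeff (F - AW_poly N a b c d q) N = 0"
      using F(2) coeff_AW_poly[OF nondeg] by simp
    show "\<forall>z\<in>Z. aw_op a b c d q (\<lambda>w. poly (F - AW_poly N a b c d q) (w + 1/w)) z
        = aw_eigenvalue a b c d q N * poly (F - AW_poly N a b c d q) (z + 1/z)"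
      using eigen AW_eigen by (simp add: aw_op_diff right_diff_distrib)
  qed
  then show ?thesis by simp
qed

section \<open>The operator for the parameters \<open>(a, b, -a, -b)\<close>\<close>

lemma aw_regular_square:
  assumes "aw_regular (q^2) (z^2)"
  shows "aw_regular q z" "1 + z^2 \<noteq> 0" "1 + q*z^2 \<noteq> 0"
proof -
  have "(z^2 - 1) * (z^2 + 1) = (z^2)^2 - 1" "(q*z^2 - 1) * (q*z^2 + 1) = q^2 * (z^2)^2 - 1"
    "(z^2 - q) * (z^2 + q) = (z^2)^2 - q^2"
    by algebra+
  moreover have "z \<noteq> 0" "(z^2)^2 - 1 \<noteq> 0" "q^2 * (z^2)^2 - 1 \<noteq> 0" "(z^2)^2 - q^2 \<noteq> 0"
    using assms by (simp_all add: aw_regular_def)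
  ultimately show "aw_regular q z" "1 + z^2 \<noteq> 0" "1 + q*z^2 \<noteq> 0"
    by (auto simp: aw_regular_def add.commute)
qed

lemma aw_regular_square_inverse:
  assumes "aw_regular (q^2) (z^2)"
  shows "aw_regular (q^2) ((1/z)^2)"
proof -
  have "(1/z)^2 = 1/z^2" by (simp add: power_one_over)
  then show ?thesis using assms aw_regular_inverse[of "q^2" "z^2"] by simp
qed

lemma aw_weight_even:
  assumes "1 + z^2 \<noteq> 0" "1 + q*z^2 \<noteq> 0"
  shows "aw_weight (a^2) (b^2) (-1) (-q) (q^2) (z^2) = aw_weight a b (-a) (-b) q z"
proof -
  have "(1 - a^2*z^2) * (1 - b^2*z^2) * (1 - (-1)*z^2) * (1 - (-q)*z^2)
      = ((1 - a*z) * (1 - b*z) * (1 - (-a)*z) * (1 - (-b)*z)) * ((1 + z^2) * (1 + q*z^2))"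
    "(1 - (z^2)^2) * (1 - q^2*(z^2)^2) = ((1 - z^2) * (1 - q*z^2)) * ((1 + z^2) * (1 + q*z^2))"
    by algebra+
  then show ?thesis
    unfolding aw_weight_def using assms by simp
qed

lemma aw_op_even:
  assumes "aw_regular (q^2) (z^2)"
  shows "aw_op a b (-a) (-b) q (\<lambda>w. g (w^2)) z = aw_op (a^2) (b^2) (-1) (-q) (q^2) g (z^2)"
proof -
  note z = aw_regular_square[OF assms] and z' = aw_regular_square[OF aw_regular_square_inverse[OF assms]]
  have "aw_weight (a^2) (b^2) (-1) (-q) (q^2) (1/z^2) = aw_weight a b (-a) (-b) q (1/z)"
    using aw_weight_even[OF z'(2,3)] by (simp add: power_one_over)
  moreover have "(q*z)^2 = q^2*z^2" "(z/q)^2 = z^2/q^2"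
    by (simp_all add: power_mult_distrib power_divide)
  ultimately show ?thesis
    unfolding aw_op_def aw_weight_even[OF z(2,3)] by simp
qed

lemma aw_weight_odd:
  assumes "1 + z^2 \<noteq> 0" "1 + q*z^2 \<noteq> 0"
  shows "aw_weight (a^2) (b^2) (-q) (-(q^2)) (q^2) (z^2) * (1 + z^2) = aw_weight a b (-a) (-b) q z * (1 + q^2*z^2)"
proof -
  have cancel: "N * M * R2 / (P * (R1 * R2)) * R1 = N / P * M" if "R1 \<noteq> 0" "R2 \<noteq> 0" for N M P R1 R2 :: complex
    using that by (cases "P = 0") (simp_all add: field_simps)
  have "(1 - a^2*z^2) * (1 - b^2*z^2) * (1 - (-q)*z^2) * (1 - (-(q^2))*z^2)
      = ((1 - a*z) * (1 - b*z) * (1 - (-a)*z) * (1 - (-b)*z)) * (1 + q^2*z^2) * (1 + q*z^2)"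
    "(1 - (z^2)^2) * (1 - q^2*(z^2)^2) = ((1 - z^2) * (1 - q*z^2)) * ((1 + z^2) * (1 + q*z^2))"
    by algebra+
  then show ?thesis
    unfolding aw_weight_def by (simp only: cancel[OF assms])
qed

lemma aw_weight_odd_shift:
  assumes "z \<noteq> 0" "q \<noteq> 0" "1 + z^2 \<noteq> 0" "1 + q*z^2 \<noteq> 0"
  shows "aw_weight a b (-a) (-b) q z * (q*z + 1/(q*z))
    = (z + 1/z) * aw_weight (a^2) (b^2) (-q) (-(q^2)) (q^2) (z^2) / q"
  using aw_weight_odd[OF assms(3,4), of a b] assms(1,2) by (simp add: field_simps power2_eq_square)

lemma aw_weight_reflection:
  assumes "aw_regular q z"
  shows "aw_weight a b (-a) (-b) q z * (1 - q*z^2) + aw_weight a b (-a) (-b) q (1/z) * (z^2 - q)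
    = (1 - a^2*b^2) * (1 + z^2)"
proof -
  define N1 where "N1 = (1 - a^2*z^2) * (1 - b^2*z^2)"
  define N2 where "N2 = (z^2 - a^2) * (z^2 - b^2)"
  have z: "z \<noteq> 0" and "1 - z^2 \<noteq> 0" "z^2 - 1 \<noteq> 0" "1 - q*z^2 \<noteq> 0" "z^2 - q \<noteq> 0"
    using assms by (auto simp: aw_regular_def)
  have "aw_weight a b (-a) (-b) q z = N1 / ((1 - z^2) * (1 - q*z^2))"
    unfolding aw_weight_def N1_def by (rule arg_cong[where f="\<lambda>n. n / _"]) algebra
  then have 1: "aw_weight a b (-a) (-b) q z * (1 - q*z^2) = N1 / (1 - z^2)"
    using \<open>1 - q*z^2 \<noteq> 0\<close> by simp
  have num: "(1 - a*(1/z)) * (1 - b*(1/z)) * (1 - (-a)*(1/z)) * (1 - (-b)*(1/z)) * z^4 = N2"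
    and den: "(1 - (1/z)^2) * (1 - q*(1/z)^2) * z^4 = (z^2 - 1) * (z^2 - q)"
    using z by (simp_all add: N2_def field_simps power2_eq_square power4_eq_xxxx)
  have "aw_weight a b (-a) (-b) q (1/z)
      = (1 - a*(1/z)) * (1 - b*(1/z)) * (1 - (-a)*(1/z)) * (1 - (-b)*(1/z)) * z^4
        / ((1 - (1/z)^2) * (1 - q*(1/z)^2) * z^4)"
    unfolding aw_weight_def by (rule mult_divide_mult_cancel_right[symmetric]) (use z in simp)
  then have "aw_weight a b (-a) (-b) q (1/z) = N2 / ((z^2 - 1) * (z^2 - q))"
    unfolding num den .
  then have 2: "aw_weight a b (-a) (-b) q (1/z) * (z^2 - q) = N2 / (z^2 - 1)"
    using \<open>z^2 - q \<noteq> 0\<close> by simp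
  have "N2 / (z^2 - 1) = - (N2 / (1 - z^2))"
    by (metis divide_minus_right minus_diff_eq)
  moreover have "N1 - N2 = (1 - a^2*b^2) * (1 + z^2) * (1 - z^2)"
    unfolding N1_def N2_def by algebra
  ultimately show ?thesis
    unfolding 1 2 using \<open>1 - z^2 \<noteq> 0\<close> by (simp add: diff_divide_distrib[symmetric])
qed

lemma aw_weight_odd_sum:
  assumes z: "aw_regular (q^2) (z^2)" and q: "q \<noteq> 0"
  shows "aw_weight a b (-a) (-b) q z + aw_weight a b (-a) (-b) q (1/z)
    = (aw_weight (a^2) (b^2) (-q) (-(q^2)) (q^2) (z^2) + aw_weight (a^2) (b^2) (-q) (-(q^2)) (q^2) (1/z^2)) / q
      - (1-q)*(1-a^2*b^2)/q"
proof -
  note z1 = aw_regular_square[OF z] and z2 = aw_regular_square[OF aw_regular_square_inverse[OF z]]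
  have "z \<noteq> 0" using z1(1) by (simp add: aw_regular_def)
  define A1 where "A1 = aw_weight a b (-a) (-b) q z"
  define A2 where "A2 = aw_weight a b (-a) (-b) q (1/z)"
  define B1 where "B1 = aw_weight (a^2) (b^2) (-q) (-(q^2)) (q^2) (z^2)"
  define B2 where "B2 = aw_weight (a^2) (b^2) (-q) (-(q^2)) (q^2) (1/z^2)"
  define K where "K = (1-q)*(1-a^2*b^2)"
  have odd1: "B1 * (1 + z^2) = A1 * (1 + q^2*z^2)"
    unfolding A1_def B1_def by (rule aw_weight_odd[OF z1(2,3)])
  have odd2: "B2 * (1 + z^2) = A2 * (z^2 + q^2)"
    using aw_weight_odd[OF z2(2,3), of a b] \<open>z \<noteq> 0\<close> unfolding A2_def B2_def
    by (simp add: power_one_over field_simps)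
  have "(B1 + B2 - K) * (1 + z^2) = B1 * (1 + z^2) + B2 * (1 + z^2) - (1-q) * ((1 - a^2*b^2) * (1 + z^2))"
    unfolding K_def by algebra
  also have "\<dots> = A1 * (1 + q^2*z^2) + A2 * (z^2 + q^2) - (1-q) * (A1 * (1 - q*z^2) + A2 * (z^2 - q))"
    unfolding odd1 odd2 A1_def A2_def aw_weight_reflection[OF z1(1)] ..
  also have "\<dots> = q * (A1 + A2) * (1 + z^2)"
    by algebra
  finally have "q * (A1 + A2) = B1 + B2 - K"
    using z1(2) by simp
  then have "A1 + A2 = (B1 + B2 - K) / q"
    using q by (simp add: eq_divide_eq mult.commute)
  then have "A1 + A2 = (B1 + B2) / q - K / q"
    by (simp add: diff_divide_distrib)
  then show ?thesis
    unfolding A1_def A2_def B1_def B2_def K_def .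
qed

lemma aw_op_odd:
  assumes z: "aw_regular (q^2) (z^2)" and q: "q \<noteq> 0"
  shows "aw_op a b (-a) (-b) q (\<lambda>w. (w + 1/w) * h (w^2)) z
    = (z + 1/z) * (aw_op (a^2) (b^2) (-q) (-(q^2)) (q^2) h (z^2) / q + (1-q)*(1-a^2*b^2)/q * h (z^2))"
proof -
  note z1 = aw_regular_square[OF z] and z2 = aw_regular_square[OF aw_regular_square_inverse[OF z]]
  have "z \<noteq> 0" using z1(1) by (simp add: aw_regular_def)
  define A1 where "A1 = aw_weight a b (-a) (-b) q z"
  define A2 where "A2 = aw_weight a b (-a) (-b) q (1/z)"
  define B1 where "B1 = aw_weight (a^2) (b^2) (-q) (-(q^2)) (q^2) (z^2)"
  define B2 where "B2 = aw_weight (a^2) (b^2) (-q) (-(q^2)) (q^2) (1/z^2)"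
  define x where "x = z + 1/z"
  define K where "K = (1-q)*(1-a^2*b^2)/q"
  have shift1: "A1 * (q*z + 1/(q*z)) = x * B1 / q"
    unfolding A1_def B1_def x_def by (rule aw_weight_odd_shift[OF \<open>z \<noteq> 0\<close> q z1(2,3)])
  have "q*(1/z) + 1/(q*(1/z)) = z/q + 1/(z/q)" "1/z + 1/(1/z) = x" "(1/z)^2 = 1/z^2"
    using \<open>z \<noteq> 0\<close> by (simp_all add: x_def field_simps power_one_over)
  then have shift2: "A2 * (z/q + 1/(z/q)) = x * B2 / q"
    using aw_weight_odd_shift[of "1/z" q a b] \<open>z \<noteq> 0\<close> q z2(2,3) unfolding A2_def B2_def
    by (simp add: add.commute)
  have sum: "A1 + A2 = (B1 + B2) / q - K"
    unfolding A1_def A2_def B1_def B2_def K_def by (rule aw_weight_odd_sum[OF z q])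
  have "aw_op a b (-a) (-b) q (\<lambda>w. (w + 1/w) * h (w^2)) z
      = (A1 * (q*z + 1/(q*z))) * h (q^2*z^2) + (A2 * (z/q + 1/(z/q))) * h (z^2/q^2) - (A1 + A2) * x * h (z^2)"
    unfolding aw_op_def A1_def A2_def x_def by (simp add: power_mult_distrib power_divide algebra_simps)
  also have "\<dots> = x * ((B1 * (h (q^2*z^2) - h (z^2)) + B2 * (h (z^2/q^2) - h (z^2))) / q + K * h (z^2))"
    unfolding shift1 shift2 sum by (simp add: algebra_simps add_divide_distrib diff_divide_distrib)
  also have "\<dots> = (z + 1/z) * (aw_op (a^2) (b^2) (-q) (-(q^2)) (q^2) h (z^2) / q + K * h (z^2))"
    unfolding aw_op_def B1_def B2_def x_def by simp
  finally show ?thesis unfolding K_def .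
qed

lemma aw_eigenvalue_even:
  assumes "q \<noteq> 0"
  shows "aw_eigenvalue (a^2) (b^2) (-1) (-q) (q^2) n = aw_eigenvalue a b (-a) (-b) q (2*n)"
  unfolding aw_eigenvalue_def using assms by (simp add: power_mult field_simps power2_eq_square)

lemma aw_eigenvalue_odd:
  assumes "q \<noteq> 0"
  shows "aw_eigenvalue (a^2) (b^2) (-q) (-(q^2)) (q^2) n / q + (1-q)*(1-a^2*b^2)/q
    = aw_eigenvalue a b (-a) (-b) q (2*n+1)"
proof -
  define M where "M = q^(2*n)"
  have "M \<noteq> 0" "(q^2)^n = M" "q^(2*n+1) = q*M"
    using assms by (simp_all add: M_def power_mult)
  then show ?thesis
    unfolding aw_eigenvalue_def using assms by (simp add: field_simps power2_eq_square)
qed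

lemma aw_op_even_AW:
  assumes nondeg: "aw_nondegenerate (a^2) (b^2) (-1) (-q) (q^2) n" and z: "aw_regular (q^2) (z^2)"
  shows "aw_op a b (-a) (-b) q (\<lambda>w. AW n (w^2) (a^2) (b^2) (-1) (-q) (q^2)) z
    = aw_eigenvalue a b (-a) (-b) q (2*n) * AW n (z^2) (a^2) (b^2) (-1) (-q) (q^2)"
proof -
  have "q \<noteq> 0" using nondeg by (simp add: aw_nondegenerate_def)
  then show ?thesis
    using aw_op_even[OF z, where g = "\<lambda>v. AW n v (a^2) (b^2) (-1) (-q) (q^2)"] aw_op_AW[OF nondeg z]
    by (simp add: aw_eigenvalue_even)
qed

lemma aw_op_odd_AW:
  assumes nondeg: "aw_nondegenerate (a^2) (b^2) (-q) (-(q^2)) (q^2) n" and z: "aw_regular (q^2) (z^2)"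
  shows "aw_op a b (-a) (-b) q (\<lambda>w. (w + 1/w) * AW n (w^2) (a^2) (b^2) (-q) (-(q^2)) (q^2)) z
    = aw_eigenvalue a b (-a) (-b) q (2*n+1) * ((z + 1/z) * AW n (z^2) (a^2) (b^2) (-q) (-(q^2)) (q^2))"
proof -
  have q: "q \<noteq> 0" using nondeg by (simp add: aw_nondegenerate_def)
  have "aw_op a b (-a) (-b) q (\<lambda>w. (w + 1/w) * AW n (w^2) (a^2) (b^2) (-q) (-(q^2)) (q^2)) z
      = (z + 1/z) * (aw_op (a^2) (b^2) (-q) (-(q^2)) (q^2) (\<lambda>v. AW n v (a^2) (b^2) (-q) (-(q^2)) (q^2)) (z^2) / q
                     + (1-q)*(1-a^2*b^2)/q * AW n (z^2) (a^2) (b^2) (-q) (-(q^2)) (q^2))"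
    by (rule aw_op_odd[OF z q])
  also have "\<dots> = (aw_eigenvalue (a^2) (b^2) (-q) (-(q^2)) (q^2) n / q + (1-q)*(1-a^2*b^2)/q)
      * ((z + 1/z) * AW n (z^2) (a^2) (b^2) (-q) (-(q^2)) (q^2))"
  proof -
    have "x * (L * E / q + K * E) = (L / q + K) * (x * E)" for x L E K :: complex
      by (simp add: algebra_simps)
    then show ?thesis unfolding aw_op_AW[OF nondeg z] .
  qed
  finally show ?thesis
    unfolding aw_eigenvalue_odd[OF q] .
qed

lemma monic_pcompose_square:
  fixes P :: "'a::idom poly"
  assumes "degree P \<le> n" "coeff P n = 1"
  shows "degree (pcompose P [:-2, 0, 1:]) \<le> 2*n" "coeff (pcompose P [:-2, 0, 1:]) (2*n) = 1"
proof -
  have "degree P = n" using assms le_degree[of P n] by simp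
  then have "degree (pcompose P [:-2, 0, 1:]) = 2*n"
    by (simp add: degree_pcompose)
  moreover have "lead_coeff (pcompose P [:-2, 0, 1:]) = 1"
    using lead_coeff_comp[of "[:-2, 0, 1:]" P] \<open>degree P = n\<close> assms(2) by simp
  ultimately show "degree (pcompose P [:-2, 0, 1:]) \<le> 2*n" "coeff (pcompose P [:-2, 0, 1:]) (2*n) = 1"
    by simp_all
qed

lemma poly_pcompose_square:
  fixes w :: "'a::field"
  assumes "w \<noteq> 0"
  shows "poly (pcompose P [:-2, 0, 1:]) (w + 1/w) = poly P (w^2 + 1/w^2)"
  using assms by (simp add: poly_pcompose field_simps power2_eq_square)

lemma AW_quadratic_even:
  assumes nondeg: "aw_nondegenerate a b (-a) (-b) q (2*n)" "aw_nondegenerate (a^2) (b^2) (-1) (-q) (q^2) n"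
    and inf: "infinite ((\<lambda>z. z + 1/z) ` {z. aw_regular (q^2) (z^2)})"
    and "z \<noteq> 0"
  shows "AW (2*n) z a b (-a) (-b) q = AW n (z^2) (a^2) (b^2) (-1) (-q) (q^2)"
proof -
  let ?E = "\<lambda>v. AW n v (a^2) (b^2) (-1) (-q) (q^2)"
  define F where "F = pcompose (AW_poly n (a^2) (b^2) (-1) (-q) (q^2)) [:-2, 0, 1:]"
  have q: "q \<noteq> 0" and a2: "a^2 \<noteq> 0" using nondeg(2) by (simp_all add: aw_nondegenerate_def)
  have poly_F: "poly F (w + 1/w) = ?E (w^2)" if "w \<noteq> 0" for w
    using that poly_AW_poly[of "w^2"] by (simp add: F_def poly_pcompose_square)
  have "F = AW_poly (2*n) a b (-a) (-b) q"
  proof (rule AW_poly_unique[OF nondeg(1) _ inf])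
    show "degree F \<le> 2*n" "coeff F (2*n) = 1"
      unfolding F_def using q
      by (intro monic_pcompose_square degree_AW_poly[OF a2] coeff_AW_poly[OF nondeg(2)], simp)+
    show "\<forall>z\<in>{z. aw_regular (q^2) (z^2)}. aw_regular q z"
      using aw_regular_square(1) by blast
    show "\<forall>z\<in>{z. aw_regular (q^2) (z^2)}. aw_op a b (-a) (-b) q (\<lambda>w. poly F (w + 1/w)) z
        = aw_eigenvalue a b (-a) (-b) q (2*n) * poly F (z + 1/z)"
    proof
      fix z assume z: "z \<in> {z. aw_regular (q^2) (z^2)}"
      then have "z \<noteq> 0" by (simp add: aw_regular_def)
      then have "aw_op a b (-a) (-b) q (\<lambda>w. poly F (w + 1/w)) z = aw_op a b (-a) (-b) q (\<lambda>w. ?E (w^2)) z"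
        using q by (intro aw_op_cong) (simp_all add: poly_F)
      then show "aw_op a b (-a) (-b) q (\<lambda>w. poly F (w + 1/w)) z
        = aw_eigenvalue a b (-a) (-b) q (2*n) * poly F (z + 1/z)"
        using aw_op_even_AW[OF nondeg(2)] z poly_F[OF \<open>z \<noteq> 0\<close>] by simp
    qed
  qed
  then show ?thesis
    using poly_F[OF \<open>z \<noteq> 0\<close>] poly_AW_poly[OF \<open>z \<noteq> 0\<close>] by simp
qed

lemma AW_quadratic_odd:
  assumes nondeg: "aw_nondegenerate a b (-a) (-b) q (2*n+1)" "aw_nondegenerate (a^2) (b^2) (-q) (-(q^2)) (q^2) n"
    and inf: "infinite ((\<lambda>z. z + 1/z) ` {z. aw_regular (q^2) (z^2)})"
    and "z \<noteq> 0"
  shows "AW (2*n+1) z a b (-a) (-b) q = (z + 1/z) * AW n (z^2) (a^2) (b^2) (-q) (-(q^2)) (q^2)"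
proof -
  let ?O = "\<lambda>v. AW n v (a^2) (b^2) (-q) (-(q^2)) (q^2)"
  define F where "F = pCons 0 (pcompose (AW_poly n (a^2) (b^2) (-q) (-(q^2)) (q^2)) [:-2, 0, 1:])"
  have q: "q \<noteq> 0" and a2: "a^2 \<noteq> 0" using nondeg(2) by (simp_all add: aw_nondegenerate_def)
  have poly_F: "poly F (w + 1/w) = (w + 1/w) * ?O (w^2)" if "w \<noteq> 0" for w
    using that poly_AW_poly[of "w^2"] by (simp add: F_def poly_pcompose_square)
  have "F = AW_poly (2*n+1) a b (-a) (-b) q"
  proof (rule AW_poly_unique[OF nondeg(1) _ inf])
    note monic = monic_pcompose_square[OF degree_AW_poly[OF a2] coeff_AW_poly[OF nondeg(2)]]
    show "degree F \<le> 2*n+1" "coeff F (2*n+1) = 1"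
      unfolding F_def using monic q degree_pCons_le[of 0] order.trans by fastforce+
    show "\<forall>z\<in>{z. aw_regular (q^2) (z^2)}. aw_regular q z"
      using aw_regular_square(1) by blast
    show "\<forall>z\<in>{z. aw_regular (q^2) (z^2)}. aw_op a b (-a) (-b) q (\<lambda>w. poly F (w + 1/w)) z
        = aw_eigenvalue a b (-a) (-b) q (2*n+1) * poly F (z + 1/z)"
    proof
      fix z assume z: "z \<in> {z. aw_regular (q^2) (z^2)}"
      then have "z \<noteq> 0" by (simp add: aw_regular_def)
      then have "aw_op a b (-a) (-b) q (\<lambda>w. poly F (w + 1/w)) z
          = aw_op a b (-a) (-b) q (\<lambda>w. (w + 1/w) * ?O (w^2)) z"
        using q by (intro aw_op_cong) (simp_all add: poly_F)
      then show "aw_op a b (-a) (-b) q (\<lambda>w. poly F (w + 1/w)) z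
        = aw_eigenvalue a b (-a) (-b) q (2*n+1) * poly F (z + 1/z)"
        using aw_op_odd_AW[OF nondeg(2)] z poly_F[OF \<open>z \<noteq> 0\<close>] by simp
    qed
  qed
  then show ?thesis
    using poly_F[OF \<open>z \<noteq> 0\<close>] poly_AW_poly[OF \<open>z \<noteq> 0\<close>] by simp
qed

section \<open>Real base \<open>0 < q < 1\<close>\<close>

lemma aw_nondegenerate_quadratic:
  fixes q :: real
  assumes q: "0 < q" "q < 1" and "a \<noteq> 0"
    and g1: "\<And>j::nat. a^2 * b^2 * of_real q ^ j \<noteq> 1"
    and g2: "\<And>j::nat. a * b * of_real q ^ j \<noteq> 1"
    and g3: "\<And>j::nat. a * b * of_real q ^ j \<noteq> -1"
    and g4: "\<And>j::nat. a^2 * of_real q ^ j \<noteq> -1"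
  shows "aw_nondegenerate a b (-a) (-b) (of_real q) N"
    and "aw_nondegenerate (a^2) (b^2) (-1) (- of_real q) (of_real q ^ 2) n"
    and "aw_nondegenerate (a^2) (b^2) (- of_real q) (- (of_real q ^ 2)) (of_real q ^ 2) n"
proof -
  define Q where "Q = complex_of_real q"
  have "Q \<noteq> 0" using q by (simp add: Q_def)
  have Q_pow: "Q ^ Suc j \<noteq> 1" for j
  proof -
    have "q ^ Suc j < 1" using q by (rule power_Suc_less_one)
    then show ?thesis by (metis Q_def of_real_eq_1_iff of_real_power order.irrefl)
  qed
  have G: "a^2 * b^2 * Q^j \<noteq> 1" "a * b * Q^j \<noteq> 1" "- (a * b * Q^j) \<noteq> 1" "- (a^2 * Q^j) \<noteq> 1" for j
    using g1[of j] g2[of j] g3[of j] g4[of j] unfolding Q_def by (simp_all add: minus_equation_iff)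
  have nz: "a^2 \<noteq> 0" "Q^2 \<noteq> 0" using \<open>a \<noteq> 0\<close> \<open>Q \<noteq> 0\<close> by simp_all
  have L: "a * (-a) * Q^k = - (a^2 * Q^k)" "a * (-b) * Q^k = - (a * b * Q^k)"
    "a * b * (-a) * (-b) * Q^k = a^2 * b^2 * Q^k" for k
    by (simp_all add: power2_eq_square)
  show "aw_nondegenerate a b (-a) (-b) Q N"
    unfolding aw_nondegenerate_def L using \<open>a \<noteq> 0\<close> \<open>Q \<noteq> 0\<close> by (intro conjI allI impI G Q_pow)
  have E: "a^2 * b^2 * (Q^2)^k = a^2 * b^2 * Q^(2*k)" "a^2 * (-1) * (Q^2)^k = - (a^2 * Q^(2*k))"
    "a^2 * (-Q) * (Q^2)^k = - (a^2 * Q^(2*k+1))" "(Q^2)^Suc k = Q^Suc (2*k+1)"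
    "a^2 * b^2 * (-1) * (-Q) * (Q^2)^k = a^2 * b^2 * Q^(2*k+1)"
    "a^2 * (-(Q^2)) * (Q^2)^k = - (a^2 * Q^(2*k+2))"
    "a^2 * b^2 * (-Q) * (-(Q^2)) * (Q^2)^k = a^2 * b^2 * Q^(2*k+3)" for k
    by (simp_all add: power_mult power_add mult_ac power2_eq_square power3_eq_cube power_mult_distrib)
  show "aw_nondegenerate (a^2) (b^2) (-1) (-Q) (Q^2) n"
    unfolding aw_nondegenerate_def E using nz by (intro conjI allI impI G Q_pow)
  show "aw_nondegenerate (a^2) (b^2) (-Q) (-(Q^2)) (Q^2) n"
    unfolding aw_nondegenerate_def E using nz by (intro conjI allI impI G Q_pow)
qed

lemma aw_regular_of_real:
  fixes q u :: real
  assumes "0 < q" "q < u" "u < 1"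
  shows "aw_regular (of_real q ^ 2) (of_real u)"
proof -
  have "q * u < 1" using mult_strict_mono[of q 1 u 1] assms by simp
  then have "u^2 < 1" "(q * u)^2 < 1" "q^2 < u^2"
    using assms by (simp_all add: power_less_one_iff power_strict_mono)
  then have "u \<noteq> 0" "u^2 \<noteq> 1" "q^2 * u^2 \<noteq> 1" "u^2 \<noteq> q^2"
    using assms by (auto simp: power_mult_distrib)
  then show ?thesis
    unfolding aw_regular_def
    by (simp only: of_real_power[symmetric] of_real_mult[symmetric] of_real_eq_iff of_real_eq_0_iff
          of_real_eq_1_iff) simp
qed

lemma inj_on_plus_inverse: "inj_on (\<lambda>t::real. t + 1/t) {0<..<1}"
proof (rule inj_onI)
  fix s t :: real assume "s \<in> {0<..<1}" "t \<in> {0<..<1}" "s + 1/s = t + 1/t"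
  then have "(s - t) * (s*t - 1) = 0" "s*t < 1"
    using mult_strict_mono[of s 1 t 1] by (simp_all add: field_simps)
  then show "s = t" by simp
qed

lemma infinite_aw_regular_squares:
  fixes q :: real
  assumes "0 < q" "q < 1"
  shows "infinite ((\<lambda>z. z + 1/z) ` {z. aw_regular (of_real q ^ 2) (z^2)})"
proof -
  let ?T = "{sqrt q<..<1}"
  have "0 < sqrt q" "sqrt q < 1" using assms by simp_all
  have T: "0 < t" "t < 1" "q < t^2" if "t \<in> ?T" for t
  proof -
    have t: "sqrt q < t" "t < 1" using that by simp_all
    then show "0 < t" "t < 1" using \<open>0 < sqrt q\<close> by linarith+
    have "(sqrt q)^2 < t^2"
      using t(1) \<open>0 < sqrt q\<close> by (intro power_strict_mono) simp_all
    then show "q < t^2" using assms(1) by simp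
  qed
  have "aw_regular (of_real q ^ 2) ((of_real t)^2)" if "t \<in> ?T" for t
    using aw_regular_of_real[OF assms(1) T(3)[OF that]] T[OF that]
    by (simp add: power_less_one_iff flip: of_real_power)
  then have "(\<lambda>t. of_real (t + 1/t)) ` ?T \<subseteq> (\<lambda>z. z + 1/z) ` {z. aw_regular (of_real q ^ 2) (z^2)}"
    by force
  moreover have "inj_on (\<lambda>t. complex_of_real (t + 1/t)) ?T"
  proof (rule inj_onI)
    fix s t assume "s \<in> ?T" "t \<in> ?T" "complex_of_real (s + 1/s) = complex_of_real (t + 1/t)"
    then have "s + 1/s = t + 1/t" "s \<in> {0<..<1}" "t \<in> {0<..<1}"
      using T[of s] T[of t] by (simp_all only: of_real_eq_iff greaterThanLessThan_iff)
    then show "s = t" by (rule inj_onD[OF inj_on_plus_inverse])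
  qed
  then have "infinite ((\<lambda>t. complex_of_real (t + 1/t)) ` ?T)"
    using infinite_Ioo[OF \<open>sqrt q < 1\<close>] finite_imageD by blast
  ultimately show ?thesis by (rule infinite_super)
qed

theorem mainTheorem5:
  fixes q :: real and a b :: complex
  assumes "0 < q" and "q < 1"
    and "a \<noteq> 0" and "b \<noteq> 0"
    and generic: "\<And>j::nat. a^2 * b^2 * of_real q ^ j \<noteq> 1"
      "\<And>j::nat. a * b * of_real q ^ j \<noteq> 1"
      "\<And>j::nat. a * b * of_real q ^ j \<noteq> -1"
      "\<And>j::nat. a^2 * of_real q ^ j \<noteq> -1"
  shows "\<forall>n::nat. \<forall>z::complex. z \<noteq> 0 \<longrightarrow>
      AW (2*n) z a b (-a) (-b) (of_real q)
        = AW n (z^2) (a^2) (b^2) (-1) (- of_real q) (of_real q ^ 2)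
    \<and> AW (2*n+1) z a b (-a) (-b) (of_real q)
        = (z + inverse z) * AW n (z^2) (a^2) (b^2) (- of_real q) (- (of_real q ^ 2)) (of_real q ^ 2)"
proof (intro allI impI conjI)
  fix n :: nat and z :: complex
  assume "z \<noteq> 0"
  note nondeg = aw_nondegenerate_quadratic[OF assms(1-3) generic]
  note inf = infinite_aw_regular_squares[OF assms(1,2)]
  show "AW (2*n) z a b (-a) (-b) (of_real q) = AW n (z^2) (a^2) (b^2) (-1) (- of_real q) (of_real q ^ 2)"
    by (rule AW_quadratic_even[OF nondeg(1,2) inf \<open>z \<noteq> 0\<close>])
  show "AW (2*n+1) z a b (-a) (-b) (of_real q)
      = (z + inverse z) * AW n (z^2) (a^2) (b^2) (- of_real q) (- (of_real q ^ 2)) (of_real q ^ 2)"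
    using AW_quadratic_odd[OF nondeg(1,3) inf \<open>z \<noteq> 0\<close>] by (simp add: inverse_eq_divide)
qed

end
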